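(* Assume $f$ satisfies conditions (A0)–(A3) below. Then there exists a constant $C>0$ such that for every $\lambda\in[0,1]$ and every $x\in\mathscr E$, if $\mathscr F_\lambda(x)=0$ then $\|x\|<C$.
   Context: Let $n,m\ge1$, $\mathbf V=\mathbb R^n$ with Euclidean inner product $x\bullet z$ and norm $|x|$; for $\mathbf y=(y^1,\dots,y^m)\in\mathbf V^m$ put $|\mathbf y|:=\max_j|y^j|$. Fix reals $0=\tau_0<\tau_1<\dots<\tau_m<2\pi$ with $\tau_{m-j+1}=2\pi-\tau_j$. Let $f:\mathbb R\times\mathbf V\times\mathbf V^m\times\mathbf V\to\mathbf V$ and for $u:\mathbb R\to\mathbf V$ put $\mathbf u_t:=(u(t-\tau_1),\dots,u(t-\tau_m))$. Let $\mathscr E:=C^2_{2\pi}(\mathbb R;\mathbf V)$ be the space of $2\pi$-periodic $C^2$ maps with norm $\|u\|:=\max\{\|u\|_\infty,\|\dot u\|_\infty,\|\ddot u\|_\infty\}$, $\mathscr C:=C_{2\pi}(\mathbb R;\mathbf V)$, $\widetilde{\mathscr C}:=C_{2\pi}(\mathbb R;\mathbf V\times\mathbf V^m\times\mathbf V)$ (sup norms). Define $L:\mathscr E\to\mathscr C$, $Lu:=\ddot u-u$ (an isomorphism); $J:\mathscr E\to\widetilde{\mathscr C}$, $(Ju)(t):=(u(t),\mathbf u_t,\dot u(t))$; $N:\widetilde{\mathscr C}\to\mathscr C$, $N(x,\mathbf y,z)(t):=f(t,x(t),\mathbf y(t),z(t))-x(t)$; and $\mathscr F_\lambda(x):=x-\lambda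 L^{-1}N(Jx)$ for $\lambda\in[0,1]$. (Thus $\mathscr F_\lambda(x)=0$ iff $x$ is a $2\pi$-periodic solution of $\ddot x=\lambda f(t,x,\mathbf x_t,\dot x)+(1-\lambda)x$.) Conditions: (A0) $f$ continuous and $2\pi$-periodic in $t$. (A1) There is $R>0$ such that: $|x|\ge R$, $|\mathbf y|\le|x|$, $x\bullet z=0$ imply $x\bullet f(t,x,\mathbf y,z)>0$. (A2) There is a continuous $\phi:[0,\infty)\to(0,\infty)$ with $\int_0^\infty\frac{s\,ds}{\phi(s)}=\infty$ and $|f(t,x,\mathbf y,z)|\le\phi(|z|)$ whenever $|x|,|\mathbf y|\le R$. (A3) There are $\alpha,K>0$ with $|f(t,x,\mathbf y,z)|\le\alpha(x\bullet f(t,x,\mathbf y,z)+|z|^2)+K$ whenever $|x|,|\mathbf y|\le R$. *)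

theory Defs
  imports "HOL-Analysis.Analysis"
begin

text \<open>The space V = R^n is an arbitrary Euclidean space 'a.
  Elements of V^m are represented as functions nat \<Rightarrow> 'a which vanish
  outside the index set {1..m}; the delays are tau 1, ..., tau m.\<close>

definition tuples :: "nat \<Rightarrow> (nat \<Rightarrow> 'a::real_normed_vector) set" where
  "tuples m = {y. \<forall>j. j \<notin> {1..m} \<longrightarrow> y j = 0}"

definition tnorm :: "nat \<Rightarrow> (nat \<Rightarrow> 'a::real_normed_vector) \<Rightarrow> real" where
  "tnorm m y = Max ((\<lambda>j. norm (y j)) ` {1..m})"

definition dot :: "(real \<Rightarrow> 'a::real_normed_vector) \<Rightarrow> real \<Rightarrow> 'a" where
  "dot u t = vector_derivative u (at t)"

definition ddot :: "(real \<Rightarrow> 'a::real_normed_vector) \<Rightarrow> real \<Rightarrow> 'a" where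
  "ddot u = dot (dot u)"

definition periodic2pi :: "(real \<Rightarrow> 'b) \<Rightarrow> bool" where
  "periodic2pi u \<longleftrightarrow> (\<forall>t. u (t + 2 * pi) = u t)"

definition spaceE :: "(real \<Rightarrow> 'a::real_normed_vector) set" where
  "spaceE = {u. periodic2pi u \<and> (\<forall>t. u differentiable at t)
      \<and> (\<forall>t. dot u differentiable at t) \<and> continuous_on UNIV (ddot u)}"

definition normE :: "(real \<Rightarrow> 'a::real_normed_vector) \<Rightarrow> real" where
  "normE u = max (Sup (range (\<lambda>t. norm (u t))))
               (max (Sup (range (\<lambda>t. norm (dot u t)))) (Sup (range (\<lambda>t. norm (ddot u t)))))"

definition spaceC :: "(real \<Rightarrow> 'a::real_normed_vector) set" where
  "spaceC = {g. periodic2pi g \<and> continuous_on UNIV g}"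

text \<open>L u = u'' - u, and its inverse (L is an isomorphism \<E> \<rightarrow> \<C>).\<close>
definition opL :: "(real \<Rightarrow> 'a::real_normed_vector) \<Rightarrow> real \<Rightarrow> 'a" where
  "opL u = (\<lambda>t. ddot u t - u t)"

definition opLinv :: "(real \<Rightarrow> 'a::real_normed_vector) \<Rightarrow> real \<Rightarrow> 'a" where
  "opLinv g = the_inv_into spaceE opL g"

definition opJ :: "nat \<Rightarrow> (nat \<Rightarrow> real) \<Rightarrow> (real \<Rightarrow> 'a::real_normed_vector)
      \<Rightarrow> real \<Rightarrow> 'a \<times> (nat \<Rightarrow> 'a) \<times> 'a" where
  "opJ m tau u = (\<lambda>t. (u t, (\<lambda>j. if j \<in> {1..m} then u (t - tau j) else 0), dot u t))"

definition opN :: "(real \<Rightarrow> 'a \<Rightarrow> (nat \<Rightarrow> 'a) \<Rightarrow> 'a \<Rightarrow> 'a::real_normed_vector)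
      \<Rightarrow> (real \<Rightarrow> 'a \<times> (nat \<Rightarrow> 'a) \<times> 'a) \<Rightarrow> real \<Rightarrow> 'a" where
  "opN f w = (\<lambda>t. f t (fst (w t)) (fst (snd (w t))) (snd (snd (w t))) - fst (w t))"

definition opF :: "nat \<Rightarrow> (nat \<Rightarrow> real) \<Rightarrow> (real \<Rightarrow> 'a \<Rightarrow> (nat \<Rightarrow> 'a) \<Rightarrow> 'a \<Rightarrow> 'a::real_normed_vector)
      \<Rightarrow> real \<Rightarrow> (real \<Rightarrow> 'a) \<Rightarrow> real \<Rightarrow> 'a" where
  "opF m tau f lam x = (\<lambda>t. x t - lam *\<^sub>R opLinv (opN f (opJ m tau x)) t)"

end

theory Submission
  imports Defs "HOL-Library.Periodic_Fun"
begin

text \<open>A zero \<open>x\<close> of \<open>F\<^sub>\<lambda>\<close> is a \<open>2\<pi>\<close>-periodic solution of \<open>x'' = \<lambda> F + (1 - \<lambda>) x\<close>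
  with \<open>F t = f t (x t) x\<^sub>t (x' t)\<close>. At a maximum of \<open>norm x\<close> we have \<open>x \<bullet> x' = 0\<close> and
  \<open>x \<bullet> x'' \<le> 0\<close>, which (A1) rules out when \<open>norm x \<ge> R\<close>; hence \<open>norm x < R\<close>, and the
  history \<open>x\<^sub>t\<close> is bounded by \<open>R\<close> as well. Now (A3) gives
  \<open>norm x'' \<le> \<alpha> (x \<bullet> x'' + norm x'\<^sup>2) + K + R\<close>, and the bracket integrates to zero over a
  period, so \<open>\<integral> norm x'' \<le> 2\<pi> (K + R)\<close>; as \<open>x'\<close> takes some value orthogonal to \<open>x' t\<close>,
  this bounds \<open>x'\<close>. Finally (A2) bounds \<open>x''\<close> by \<open>R\<close> plus the maximum of \<open>\<phi>\<close> on
  \<open>[0, 2\<pi> (K + R)]\<close>.\<close>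

lemma has_vector_derivative_at_shift:
  fixes u :: "real \<Rightarrow> 'a::real_normed_vector"
  assumes "(u has_vector_derivative u') (at (t + p))"
  shows "((\<lambda>s. u (s + p)) has_vector_derivative u') (at t)"
proof -
  have "((\<lambda>s. s + p) has_vector_derivative 1) (at t)"
    by (auto intro!: derivative_eq_intros)
  from vector_diff_chain_at[OF this] assms show ?thesis
    by (simp add: o_def)
qed

lemma periodic_vector_derivative:
  fixes u :: "real \<Rightarrow> 'a::real_normed_vector"
  assumes u': "\<And>t. (u has_vector_derivative u' t) (at t)"
    and per: "\<And>t. u (t + p) = u t"
  shows "u' (t + p) = u' t"
proof -
  have "((\<lambda>s. u (s + p)) has_vector_derivative u' (t + p)) (at t)"
    by (rule has_vector_derivative_at_shift[OF u'])
  then have "(u has_vector_derivative u' (t + p)) (at t)"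
    using per by simp
  then show ?thesis
    using u' vector_derivative_unique_at by blast
qed

lemma periodic_attains_sup:
  fixes g :: "real \<Rightarrow> real"
  assumes cont: "continuous_on UNIV g" and per: "\<And>t. g (t + 2 * pi) = g t"
  obtains t0 where "\<And>s. g s \<le> g t0"
proof -
  interpret periodic_fun_simple g "2 * pi"
    by standard (rule per)
  have "\<exists>t0\<in>{0..2 * pi}. \<forall>s\<in>{0..2 * pi}. g s \<le> g t0"
    by (rule continuous_attains_sup) (auto intro: continuous_on_subset[OF cont])
  then obtain t0 where t0: "\<And>s. s \<in> {0..2 * pi} \<Longrightarrow> g s \<le> g t0"
    by blast
  have "g s \<le> g t0" for s
  proof -
    define k where "k = \<lfloor>s / (2 * pi)\<rfloor>"
    have "of_int k * (2 * pi) \<le> s" "s < (of_int k + 1) * (2 * pi)"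
      using floor_divide_lower[of "2 * pi" s] floor_divide_upper[of "2 * pi" s]
      by (simp_all add: k_def)
    then have "s - of_int k * (2 * pi) \<in> {0..2 * pi}"
      by (simp add: algebra_simps)
    moreover have "g s = g (s - of_int k * (2 * pi))"
      using minus_of_int[of s k] by simp
    ultimately show ?thesis
      using t0 by simp
  qed
  then show ?thesis
    using that by blast
qed

lemma continuous_on_UNIV_has_antiderivative:
  fixes h :: "real \<Rightarrow> 'a::euclidean_space"
  assumes cont: "continuous_on UNIV h"
  obtains G where "\<And>t. (G has_vector_derivative h t) (at t)"
proof -
  define G where "G t = integral {0..t} h - integral {t..0} h" for t
  have int: "h integrable_on {a..b}" for a b
    by (rule integrable_continuous_real) (rule continuous_on_subset[OF cont], auto)
  have G_eq: "G s = integral {a..s} h - integral {a..0} h" if "a \<le> s" "a \<le> 0" for a s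
  proof (cases "0 \<le> s")
    case True
    have "integral {a..0} h + integral {0..s} h = integral {a..s} h"
      by (rule Henstock_Kurzweil_Integration.integral_combine) (use that True int in auto)
    moreover have "integral {s..0} h = 0"
      using True by (cases "s = 0") auto
    ultimately show ?thesis
      unfolding G_def by (simp add: algebra_simps)
  next
    case False
    have "integral {a..s} h + integral {s..0} h = integral {a..0} h"
      by (rule Henstock_Kurzweil_Integration.integral_combine) (use that False int in auto)
    then show ?thesis
      using False unfolding G_def by (simp add: algebra_simps)
  qed
  have "(G has_vector_derivative h t) (at t)" for t
  proof -
    define a where "a = min t 0 - 1"
    define b where "b = max t 0 + 1"
    have ab: "a < t" "t < b"
      unfolding a_def b_def by auto
    have "((\<lambda>s. integral {a..s} h) has_vector_derivative h t) (at t within {a..b})"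
      by (rule integral_has_vector_derivative) (use ab in \<open>auto intro: continuous_on_subset[OF cont]\<close>)
    then have "((\<lambda>s. integral {a..s} h - integral {a..0} h) has_vector_derivative h t) (at t)"
      using at_within_Icc_at[OF ab] by (auto intro: derivative_eq_intros)
    then show ?thesis
      by (rule has_vector_derivative_transform_within_open[of _ _ _ "{a<..<b}"])
         (use ab a_def in \<open>auto intro!: G_eq[symmetric]\<close>)
  qed
  then show ?thesis
    using that by blast
qed

lemma linear_ode_solution_exp:
  fixes d :: "real \<Rightarrow> 'a::real_normed_vector"
  assumes "\<And>t. (d has_vector_derivative c *\<^sub>R d t) (at t)"
  shows "d t = exp (c * t) *\<^sub>R d 0"
proof -
  define z where "z s = exp (- c * s) *\<^sub>R d s" for s
  have "(z has_vector_derivative 0) (at s within UNIV)" for s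
  proof -
    have "((\<lambda>s. exp (- c * s)) has_real_derivative exp (- c * s) * (- c)) (at s)"
      by (auto intro!: derivative_eq_intros)
    from has_vector_derivative_scaleR[OF this assms]
    show ?thesis
      unfolding z_def by (simp add: algebra_simps)
  qed
  then obtain k where "\<And>s. s \<in> UNIV \<Longrightarrow> z s = k"
    by (rule has_vector_derivative_zero_constant[OF convex_UNIV]) blast+
  then have "z t = z 0"
    by simp
  then have "exp (- c * t) *\<^sub>R d t = d 0"
    by (simp add: z_def)
  then have "exp (c * t) *\<^sub>R (exp (- c * t) *\<^sub>R d t) = exp (c * t) *\<^sub>R d 0"
    by simp
  then show ?thesis
    by (simp add: exp_minus_inverse mult_exp_exp[symmetric])
qed

text \<open>Variation of constants, with the initial value chosen so that the solution closes up
  after one period; this is possible because \<open>exp (2 * pi * c) \<noteq> 1\<close>.\<close>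

lemma periodic_first_order_solution:
  fixes h :: "real \<Rightarrow> 'a::euclidean_space"
  assumes cont: "continuous_on UNIV h" and per: "\<And>t. h (t + 2 * pi) = h t" and "c \<noteq> 0"
  obtains y where "\<And>t. y (t + 2 * pi) = y t"
    and "\<And>t. (y has_vector_derivative c *\<^sub>R y t + h t) (at t)"
proof -
  have "continuous_on UNIV (\<lambda>s. exp (- c * s) *\<^sub>R h s)"
    by (intro continuous_intros cont)
  then obtain G where G: "\<And>t. (G has_vector_derivative exp (- c * t) *\<^sub>R h t) (at t)"
    using continuous_on_UNIV_has_antiderivative by blast
  define e where "e = exp (2 * pi * c)"
  have "e \<noteq> 1"
    unfolding e_def using \<open>c \<noteq> 0\<close> by simp
  define a where "a = (1 / (e - 1)) *\<^sub>R (G 0 - e *\<^sub>R G (2 * pi))"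
  define y where "y t = exp (c * t) *\<^sub>R (G t + a)" for t
  have y': "(y has_vector_derivative c *\<^sub>R y t + h t) (at t)" for t
  proof -
    have "((\<lambda>s. exp (c * s)) has_real_derivative exp (c * t) * c) (at t)"
      by (auto intro!: derivative_eq_intros)
    moreover have "((\<lambda>s. G s + a) has_vector_derivative exp (- c * t) *\<^sub>R h t) (at t)"
      using G by (simp add: has_vector_derivative_add_const)
    ultimately have "(y has_vector_derivative
        exp (c * t) *\<^sub>R (exp (- c * t) *\<^sub>R h t) + (exp (c * t) * c) *\<^sub>R (G t + a)) (at t)"
      unfolding y_def by (rule has_vector_derivative_scaleR)
    then show ?thesis
      by (simp add: y_def exp_minus_inverse mult.commute add.commute)
  qed
  have "(e - 1) *\<^sub>R a = G 0 - e *\<^sub>R G (2 * pi)"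
    using \<open>e \<noteq> 1\<close> by (simp add: a_def)
  then have "e *\<^sub>R (G (2 * pi) + a) = G 0 + a"
    by (simp add: algebra_simps)
  then have y_closes: "y (0 + 2 * pi) = y 0"
    by (simp add: y_def e_def mult.commute)
  define d where "d t = y (t + 2 * pi) - y t" for t
  have "(d has_vector_derivative c *\<^sub>R d t) (at t)" for t
  proof -
    have "(d has_vector_derivative (c *\<^sub>R y (t + 2 * pi) + h (t + 2 * pi)) - (c *\<^sub>R y t + h t)) (at t)"
      unfolding d_def by (intro derivative_intros has_vector_derivative_at_shift y')
    then show ?thesis
      using per by (simp add: d_def algebra_simps)
  qed
  then have "d t = 0" for t
    using linear_ode_solution_exp[of d c t] y_closes by (simp add: d_def)
  then show ?thesis
    using that y' unfolding d_def by auto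
qed

lemma has_real_derivative_inner:
  fixes x z :: "real \<Rightarrow> 'a::real_inner"
  assumes "(x has_vector_derivative x') (at t)" "(z has_vector_derivative z') (at t)"
  shows "((\<lambda>s. x s \<bullet> z s) has_real_derivative x' \<bullet> z t + x t \<bullet> z') (at t)"
  using has_derivative_inner[OF assms[unfolded has_vector_derivative_def]]
  unfolding has_field_derivative_def
  by (rule has_derivative_eq_rhs) (auto simp: algebra_simps inner_commute)

lemma second_derivative_nonpos_at_max:
  fixes r :: "real \<Rightarrow> real"
  assumes r': "\<And>t. (r has_real_derivative r1 t) (at t)"
    and r'': "(r1 has_real_derivative r2) (at t0)"
    and max: "\<And>s. r s \<le> r t0"
  shows "r2 \<le> 0"
proof (rule ccontr)
  assume "\<not> r2 \<le> 0"
  then obtain d where d: "d > 0" "\<And>h. h > 0 \<Longrightarrow> h < d \<Longrightarrow> r1 t0 < r1 (t0 + h)"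
    using DERIV_pos_inc_right[OF r''] by auto
  have "r1 t0 = 0"
    by (rule DERIV_local_max[OF r', of 1]) (use max in auto)
  obtain w where w: "t0 < w" "w < t0 + d / 2" "r (t0 + d / 2) - r t0 = (d / 2) * r1 w"
    using MVT2[of t0 "t0 + d / 2" r r1] r' d(1) by auto
  have "r1 w > 0"
    using d(2)[of "w - t0"] w \<open>r1 t0 = 0\<close> by simp
  then have "(d / 2) * r1 w > 0"
    using d(1) by simp
  then have "r (t0 + d / 2) > r t0"
    using w(3) by linarith
  then show False
    using max[of "t0 + d / 2"] by simp
qed

lemma periodic_max_norm_second_derivative:
  fixes x :: "real \<Rightarrow> 'a::real_inner"
  assumes x': "\<And>t. (x has_vector_derivative x' t) (at t)"
    and x'': "\<And>t. (x' has_vector_derivative x'' t) (at t)"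
    and per: "\<And>t. x (t + 2 * pi) = x t"
  obtains t0 where "\<And>s. norm (x s) \<le> norm (x t0)" and "x t0 \<bullet> x' t0 = 0"
    and "x t0 \<bullet> x'' t0 \<le> 0"
proof -
  define r where "r t = x t \<bullet> x t" for t
  have r': "(r has_real_derivative 2 * (x t \<bullet> x' t)) (at t)" for t
    using has_real_derivative_inner[OF x' x'] unfolding r_def by (simp add: inner_commute)
  have r'': "((\<lambda>t. 2 * (x t \<bullet> x' t)) has_real_derivative 2 * (x' t \<bullet> x' t + x t \<bullet> x'' t)) (at t)" for t
    by (rule DERIV_cmult) (rule has_real_derivative_inner[OF x' x''])
  have "continuous_on UNIV r"
    using r' by (meson DERIV_continuous continuous_at_imp_continuous_on)
  moreover have "r (t + 2 * pi) = r t" for t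
    by (simp add: r_def per)
  ultimately obtain t0 where max: "\<And>s. r s \<le> r t0"
    using periodic_attains_sup by blast
  show ?thesis
  proof (rule that)
    show "norm (x s) \<le> norm (x t0)" for s
      using max[of s] by (simp add: r_def norm_le)
    show orth: "x t0 \<bullet> x' t0 = 0"
      using DERIV_local_max[OF r'[of t0], of 1] max by simp
    have "2 * (x' t0 \<bullet> x' t0 + x t0 \<bullet> x'' t0) \<le> 0"
      by (rule second_derivative_nonpos_at_max[OF r' r'' max])
    then have "x t0 \<bullet> x'' t0 \<le> - (x' t0 \<bullet> x' t0)"
      by (simp add: algebra_simps)
    also have "\<dots> \<le> 0"
      by simp
    finally show "x t0 \<bullet> x'' t0 \<le> 0" .
  qed
qed

lemma dot_eqI:
  assumes "\<And>t. (u has_vector_derivative u' t) (at t)"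
  shows "dot u = u'"
  using assms by (auto simp: dot_def intro!: ext vector_derivative_at)

lemma spaceE_I:
  fixes u :: "real \<Rightarrow> 'a::real_normed_vector"
  assumes u': "\<And>t. (u has_vector_derivative u' t) (at t)"
    and u'': "\<And>t. (u' has_vector_derivative u'' t) (at t)"
    and cont: "continuous_on UNIV u''" and per: "\<And>t. u (t + 2 * pi) = u t"
  shows "u \<in> spaceE" and "dot u = u'" and "ddot u = u''"
proof -
  show dot: "dot u = u'"
    by (rule dot_eqI[OF u'])
  show ddot: "ddot u = u''"
    unfolding ddot_def dot by (rule dot_eqI[OF u''])
  show "u \<in> spaceE"
    using u' u'' cont per
    by (auto simp: spaceE_def periodic2pi_def dot ddot intro: differentiableI_vector)
qed

lemma spaceE_D:
  fixes u :: "real \<Rightarrow> 'a::real_normed_vector"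
  assumes "u \<in> spaceE"
  shows spaceE_has_dot: "(u has_vector_derivative dot u t) (at t)"
    and spaceE_has_ddot: "(dot u has_vector_derivative ddot u t) (at t)"
    and spaceE_continuous: "continuous_on UNIV u"
    and spaceE_dot_continuous: "continuous_on UNIV (dot u)"
    and spaceE_ddot_continuous: "continuous_on UNIV (ddot u)"
    and spaceE_periodic: "u (t + 2 * pi) = u t"
    and spaceE_dot_periodic: "dot u (t + 2 * pi) = dot u t"
proof -
  have u': "(u has_vector_derivative dot u s) (at s)" for s
    using assms unfolding spaceE_def dot_def by (simp add: vector_derivative_works[symmetric])
  have u'': "(dot u has_vector_derivative ddot u s) (at s)" for s
    using assms unfolding spaceE_def ddot_def dot_def[of "dot u"]
    by (simp add: vector_derivative_works[symmetric])
  have per: "u (s + 2 * pi) = u s" for s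
    using assms unfolding spaceE_def periodic2pi_def by simp
  show "(u has_vector_derivative dot u t) (at t)" "(dot u has_vector_derivative ddot u t) (at t)"
    "u (t + 2 * pi) = u t" "dot u (t + 2 * pi) = dot u t"
    using u' u'' per periodic_vector_derivative[OF u' per] by auto
  show "continuous_on UNIV u" "continuous_on UNIV (dot u)"
    using u' u'' by (meson continuous_at_imp_continuous_on has_vector_derivative_continuous)+
  show "continuous_on UNIV (ddot u)"
    using assms unfolding spaceE_def by simp
qed

text \<open>Injectivity of \<open>L\<close> is the maximum principle for \<open>d'' = d\<close>: at a maximum of \<open>norm d\<close>
  we get \<open>norm (d t0)\<^sup>2 = d t0 \<bullet> d'' t0 \<le> 0\<close>.\<close>

lemma inj_on_opL: "inj_on opL (spaceE :: (real \<Rightarrow> 'a::real_inner) set)"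
proof (rule inj_onI)
  fix u v :: "real \<Rightarrow> 'a"
  assume u: "u \<in> spaceE" and v: "v \<in> spaceE" and eq: "opL u = opL v"
  define d where "d t = u t - v t" for t
  have d'': "ddot u t - ddot v t = d t" for t
    using fun_cong[OF eq, of t] unfolding opL_def d_def by (simp add: algebra_simps)
  obtain t0 where max: "\<And>s. norm (d s) \<le> norm (d t0)"
    and "d t0 \<bullet> (ddot u t0 - ddot v t0) \<le> 0"
  proof (rule periodic_max_norm_second_derivative)
    show "(d has_vector_derivative dot u t - dot v t) (at t)" for t
      unfolding d_def by (intro derivative_intros spaceE_has_dot u v)
    show "((\<lambda>t. dot u t - dot v t) has_vector_derivative ddot u t - ddot v t) (at t)" for t
      by (intro derivative_intros spaceE_has_ddot u v)
    show "d (t + 2 * pi) = d t" for t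
      unfolding d_def using spaceE_periodic[OF u] spaceE_periodic[OF v] by simp
  qed blast
  then have "d t0 \<bullet> d t0 \<le> 0"
    using d'' by simp
  then have "d t0 = 0"
    by (meson inner_gt_zero_iff not_le)
  then show "u = v"
    using max by (simp add: d_def fun_eq_iff)
qed

text \<open>Surjectivity: \<open>L = (D + 1)(D - 1)\<close>, so solve two periodic first-order equations.\<close>

lemma opL_surj:
  fixes g :: "real \<Rightarrow> 'a::euclidean_space"
  assumes "g \<in> spaceC"
  obtains u where "u \<in> spaceE" and "opL u = g"
proof -
  have g: "continuous_on UNIV g" "\<And>t. g (t + 2 * pi) = g t"
    using assms unfolding spaceC_def periodic2pi_def by auto
  obtain w where w_per: "\<And>t. w (t + 2 * pi) = w t"
    and w': "\<And>t. (w has_vector_derivative w t + g t) (at t)"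
    using periodic_first_order_solution[OF g, of 1] by auto
  have w_cont: "continuous_on UNIV w"
    using w' by (meson continuous_at_imp_continuous_on has_vector_derivative_continuous)
  obtain u where u_per: "\<And>t. u (t + 2 * pi) = u t"
    and u': "\<And>t. (u has_vector_derivative w t - u t) (at t)"
    using periodic_first_order_solution[OF w_cont w_per, of "- 1"] by auto
  have u'': "((\<lambda>t. w t - u t) has_vector_derivative u t + g t) (at t)" for t
    using has_vector_derivative_diff[OF w' u'] by (simp add: add.commute)
  have "continuous_on UNIV (\<lambda>t. u t + g t)"
    using u' g(1) by (intro continuous_intros)
      (meson continuous_at_imp_continuous_on has_vector_derivative_continuous)
  note u_spaceE = spaceE_I[OF u' u'' this u_per]
  show ?thesis
    by (rule that[OF u_spaceE(1)]) (simp add: opL_def u_spaceE(3))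
qed

lemma opL_opLinv:
  fixes g :: "real \<Rightarrow> 'a::euclidean_space"
  assumes "g \<in> spaceC"
  shows "opLinv g \<in> spaceE" and "opL (opLinv g) = g"
proof -
  obtain u where u: "u \<in> spaceE" "opL u = g"
    using opL_surj[OF assms] .
  then have "opLinv g = u"
    unfolding opLinv_def using the_inv_into_f_f[OF inj_on_opL] by blast
  then show "opLinv g \<in> spaceE" "opL (opLinv g) = g"
    using u by simp_all
qed

definition delayed :: "nat \<Rightarrow> (nat \<Rightarrow> real) \<Rightarrow> (real \<Rightarrow> 'a::real_normed_vector) \<Rightarrow> real \<Rightarrow> nat \<Rightarrow> 'a"
  where "delayed m tau x t = (\<lambda>j. if j \<in> {1..m} then x (t - tau j) else 0)"

lemma delayed_in_tuples: "delayed m tau x t \<in> tuples m"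
  by (simp add: delayed_def tuples_def)

lemma tnorm_delayed_le:
  assumes "m \<ge> 1" and "\<And>s. norm (x s) \<le> c"
  shows "tnorm m (delayed m tau x t) \<le> c"
  unfolding tnorm_def using assms by (subst Max_le_iff) (auto simp: delayed_def)

lemma delayed_periodic:
  assumes "\<And>t. x (t + 2 * pi) = x t"
  shows "delayed m tau x (t + 2 * pi) = delayed m tau x t"
  using assms[of "t - tau j" for j] by (simp add: delayed_def fun_eq_iff algebra_simps)

lemma continuous_on_delayed:
  assumes "continuous_on UNIV x"
  shows "continuous_on UNIV (delayed m tau x)"
proof (rule continuous_on_coordinatewise_then_product)
  fix j
  show "continuous_on UNIV (\<lambda>t. delayed m tau x t j)"
    unfolding delayed_def
    by (cases "j \<in> {1..m}") (auto intro!: continuous_on_compose2[OF assms] continuous_intros)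
qed

lemma opN_opJ_eq:
  "opN f (opJ m tau x) = (\<lambda>t. f t (x t) (delayed m tau x t) (dot x t) - x t)"
  by (simp add: opN_def opJ_def delayed_def)

lemma opN_opJ_in_spaceC:
  fixes f :: "real \<Rightarrow> 'a::euclidean_space \<Rightarrow> (nat \<Rightarrow> 'a) \<Rightarrow> 'a \<Rightarrow> 'a"
  assumes cont: "continuous_on (UNIV \<times> UNIV \<times> tuples m \<times> UNIV) (\<lambda>(t, x, y, z). f t x y z)"
    and per: "\<forall>t x y z. y \<in> tuples m \<longrightarrow> f (t + 2 * pi) x y z = f t x y z"
    and x: "x \<in> spaceE"
  shows "opN f (opJ m tau x) \<in> spaceC"
proof -
  define F where "F t = f t (x t) (delayed m tau x t) (dot x t)" for t
  have "continuous_on UNIV (\<lambda>t. (\<lambda>(t, x, y, z). f t x y z) (t, x t, delayed m tau x t, dot x t))"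
    by (rule continuous_on_compose2[OF cont])
      (auto simp: delayed_in_tuples intro!: continuous_intros continuous_on_delayed
        spaceE_continuous[OF x] spaceE_dot_continuous[OF x])
  then have "continuous_on UNIV F"
    by (simp add: F_def)
  moreover have "F (t + 2 * pi) = F t" for t
    unfolding F_def delayed_periodic[where x = x, OF spaceE_periodic[OF x]] spaceE_periodic[OF x]
      spaceE_dot_periodic[OF x]
    using per delayed_in_tuples by blast
  ultimately show ?thesis
    using spaceE_periodic[OF x] unfolding opN_opJ_eq F_def[symmetric]
    by (auto simp: spaceC_def periodic2pi_def intro!: continuous_intros spaceE_continuous[OF x])
qed

lemma ddot_scaleR:
  assumes "v \<in> spaceE"
  shows "ddot (\<lambda>t. c *\<^sub>R v t) = (\<lambda>t. c *\<^sub>R ddot v t)"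
proof (rule spaceE_I(3))
  show "((\<lambda>t. c *\<^sub>R v t) has_vector_derivative c *\<^sub>R dot v t) (at t)" for t
    using spaceE_has_dot[OF assms]
    by (rule bounded_linear.has_vector_derivative[OF bounded_linear_scaleR_right])
  show "((\<lambda>t. c *\<^sub>R dot v t) has_vector_derivative c *\<^sub>R ddot v t) (at t)" for t
    using spaceE_has_ddot[OF assms]
    by (rule bounded_linear.has_vector_derivative[OF bounded_linear_scaleR_right])
  show "continuous_on UNIV (\<lambda>t. c *\<^sub>R ddot v t)"
    by (intro continuous_intros spaceE_ddot_continuous assms)
  show "c *\<^sub>R v (t + 2 * pi) = c *\<^sub>R v t" for t
    by (simp add: spaceE_periodic[OF assms])
qed

lemma opF_zero_imp_ode:
  fixes f :: "real \<Rightarrow> 'a::euclidean_space \<Rightarrow> (nat \<Rightarrow> 'a) \<Rightarrow> 'a \<Rightarrow> 'a"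
  assumes cont: "continuous_on (UNIV \<times> UNIV \<times> tuples m \<times> UNIV) (\<lambda>(t, x, y, z). f t x y z)"
    and per: "\<forall>t x y z. y \<in> tuples m \<longrightarrow> f (t + 2 * pi) x y z = f t x y z"
    and x: "x \<in> spaceE" and zero: "opF m tau f lam x = (\<lambda>t. 0)"
  shows "ddot x t = lam *\<^sub>R f t (x t) (delayed m tau x t) (dot x t) + (1 - lam) *\<^sub>R x t"
proof -
  define v where "v = opLinv (opN f (opJ m tau x))"
  have v: "v \<in> spaceE" "opL v = opN f (opJ m tau x)"
    unfolding v_def by (rule opL_opLinv[OF opN_opJ_in_spaceC[OF cont per x]])+
  have x_eq: "x = (\<lambda>t. lam *\<^sub>R v t)"
    using zero unfolding opF_def v_def[symmetric] by (simp add: fun_eq_iff)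
  have "ddot x t = lam *\<^sub>R ddot v t"
    by (subst x_eq) (simp add: ddot_scaleR[OF v(1)])
  also have "ddot v t = f t (x t) (delayed m tau x t) (dot x t) - x t + v t"
    using fun_cong[OF v(2), of t] by (simp add: opL_def opN_opJ_eq algebra_simps)
  finally show ?thesis
    using fun_cong[OF x_eq, of t, symmetric] by (simp add: algebra_simps)
qed

lemma homotopy_solution_norm_lt:
  fixes x F :: "real \<Rightarrow> 'a::real_inner"
  assumes x: "x \<in> spaceE" and lam: "lam \<in> {0..1}" and "0 < R"
    and ode: "\<And>t. ddot x t = lam *\<^sub>R F t + (1 - lam) *\<^sub>R x t"
    and outward: "\<And>t. R \<le> norm (x t) \<Longrightarrow> (\<And>s. norm (x s) \<le> norm (x t)) \<Longrightarrow>
        x t \<bullet> dot x t = 0 \<Longrightarrow> 0 < x t \<bullet> F t"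
  shows "norm (x t) < R"
proof -
  obtain t0 where max: "\<And>s. norm (x s) \<le> norm (x t0)"
    and orth: "x t0 \<bullet> dot x t0 = 0" and inward: "x t0 \<bullet> ddot x t0 \<le> 0"
    using periodic_max_norm_second_derivative[OF spaceE_has_dot[OF x] spaceE_has_ddot[OF x]
        spaceE_periodic[OF x]] by blast
  have "norm (x t0) < R"
  proof (rule ccontr)
    assume "\<not> norm (x t0) < R"
    then have "0 < x t0 \<bullet> F t0" and "0 < x t0 \<bullet> x t0"
      using outward[OF _ max orth] \<open>0 < R\<close> by auto
    then have "0 < lam * (x t0 \<bullet> F t0) + (1 - lam) * (x t0 \<bullet> x t0)"
      using lam by (cases "lam = 0") (auto intro: add_pos_nonneg)
    then show False
      using inward by (simp add: ode inner_add_right)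
  qed
  then show ?thesis
    using max[of t] by simp
qed

lemma spaceE_integral_period_inner:
  fixes x :: "real \<Rightarrow> 'a::real_inner"
  assumes x: "x \<in> spaceE"
  shows "((\<lambda>s. x s \<bullet> ddot x s + dot x s \<bullet> dot x s) has_integral 0) {t..t + 2 * pi}"
proof -
  define q where "q s = x s \<bullet> dot x s" for s
  have "((\<lambda>s. dot x s \<bullet> dot x s + x s \<bullet> ddot x s) has_integral q (t + 2 * pi) - q t) {t..t + 2 * pi}"
    unfolding q_def has_real_derivative_iff_has_vector_derivative[symmetric]
    by (rule fundamental_theorem_of_calculus)
      (auto intro: has_field_derivative_at_within
        has_real_derivative_inner[OF spaceE_has_dot[OF x] spaceE_has_ddot[OF x]]
        simp: has_real_derivative_iff_has_vector_derivative[symmetric])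
  moreover have "q (t + 2 * pi) = q t"
    unfolding q_def using spaceE_periodic[OF x] spaceE_dot_periodic[OF x] by simp
  ultimately show ?thesis
    by (simp add: add.commute)
qed

text \<open>By Rolle's theorem applied to \<open>s \<mapsto> dot x t \<bullet> x s\<close>, some \<open>dot x z\<close> is orthogonal to
  \<open>dot x t\<close>; hence \<open>norm (dot x t) \<le> norm (dot x t - dot x z)\<close>.\<close>

lemma spaceE_norm_dot_le_integral:
  fixes x :: "real \<Rightarrow> 'a::euclidean_space"
  assumes x: "x \<in> spaceE"
  shows "norm (dot x t) \<le> integral {t..t + 2 * pi} (\<lambda>s. norm (ddot x s))"
proof -
  define \<psi> where "\<psi> s = dot x t \<bullet> x s" for s
  have \<psi>': "(\<psi> has_real_derivative dot x t \<bullet> dot x s) (at s)" for s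
    using has_real_derivative_inner[OF has_vector_derivative_const spaceE_has_dot[OF x]]
    unfolding \<psi>_def by simp
  have "continuous_on {t..t + 2 * pi} \<psi>"
    using \<psi>' by (meson DERIV_continuous continuous_at_imp_continuous_on)
  moreover have "\<psi> t = \<psi> (t + 2 * pi)"
    unfolding \<psi>_def using spaceE_periodic[OF x] by simp
  moreover have "\<psi> differentiable (at s)" for s
    using \<psi>' real_differentiable_def by blast
  ultimately obtain z where z: "t < z" "z < t + 2 * pi" and "(\<psi> has_real_derivative 0) (at z)"
    using Rolle[of t "t + 2 * pi" \<psi>] pi_gt_zero by force
  then have orth: "dot x t \<bullet> dot x z = 0"
    using DERIV_unique[OF \<psi>'] by blast
  have int: "ddot x integrable_on {a..b}" "(\<lambda>s. norm (ddot x s)) integrable_on {a..b}" for a b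
    by (auto intro!: integrable_continuous_real continuous_intros
        continuous_on_subset[OF spaceE_ddot_continuous[OF x]])
  have "(norm (dot x t))\<^sup>2 \<le> (norm (dot x t + - dot x z))\<^sup>2"
    using norm_add_Pythagorean[of "dot x t" "- dot x z"] orth by (simp add: orthogonal_def)
  then have "norm (dot x t) \<le> norm (dot x z - dot x t)"
    by (simp add: norm_minus_commute power2_le_iff_abs_le)
  also have "dot x z - dot x t = integral {t..z} (ddot x)"
    using z by (intro integral_unique[symmetric] fundamental_theorem_of_calculus)
      (auto intro: has_vector_derivative_at_within spaceE_has_ddot[OF x])
  also have "norm \<dots> \<le> integral {t..z} (\<lambda>s. norm (ddot x s))"
    by (rule integral_norm_bound_integral[OF int]) simp
  also have "\<dots> \<le> integral {t..t + 2 * pi} (\<lambda>s. norm (ddot x s))"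
    using z by (intro integral_subset_le int) auto
  finally show ?thesis .
qed

lemma norm_convex_combination_le:
  fixes F v :: "'a::real_normed_vector"
  assumes "0 \<le> lam" "lam \<le> 1" "norm v \<le> R"
  shows "norm (lam *\<^sub>R F + (1 - lam) *\<^sub>R v) \<le> lam * norm F + R"
proof -
  have "norm (lam *\<^sub>R F + (1 - lam) *\<^sub>R v) \<le> lam * norm F + (1 - lam) * norm v"
    using norm_triangle_ineq[of "lam *\<^sub>R F" "(1 - lam) *\<^sub>R v"] assms by simp
  moreover have "(1 - lam) * norm v \<le> norm v"
    using assms by (simp add: mult_left_le_one_le)
  ultimately show ?thesis
    using assms(3) by linarith
qed

lemma norm_convex_combination_le_inner:
  fixes F v :: "'a::real_inner"
  assumes lam: "0 \<le> lam" "lam \<le> 1" and "norm v \<le> R"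
    and "0 \<le> \<alpha>" "0 \<le> K" "0 \<le> w"
    and F_bound: "norm F \<le> \<alpha> * (v \<bullet> F + w) + K"
  shows "norm (lam *\<^sub>R F + (1 - lam) *\<^sub>R v) \<le> \<alpha> * (v \<bullet> (lam *\<^sub>R F + (1 - lam) *\<^sub>R v) + w) + (K + R)"
proof -
  have "lam * (v \<bullet> F) \<le> v \<bullet> (lam *\<^sub>R F + (1 - lam) *\<^sub>R v)"
    using lam by (simp add: inner_add_right)
  moreover have "lam * w \<le> w" "lam * K \<le> K"
    using assms by (simp_all add: mult_left_le_one_le)
  moreover have "lam * norm F \<le> \<alpha> * (lam * (v \<bullet> F) + lam * w) + lam * K"
    using mult_left_mono[OF F_bound lam(1)] by (simp add: algebra_simps)
  ultimately have "lam * norm F \<le> \<alpha> * (v \<bullet> (lam *\<^sub>R F + (1 - lam) *\<^sub>R v) + w) + K"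
    using \<open>0 \<le> \<alpha>\<close> by (smt (verit) add_mono mult_left_mono)
  then show ?thesis
    using norm_convex_combination_le[OF lam \<open>norm v \<le> R\<close>, of F] by linarith
qed

text \<open>Integrating the pointwise bound over a period kills the term \<open>x \<bullet> x'' + norm x'\<^sup>2\<close>.\<close>

lemma homotopy_solution_dot_bound:
  fixes x F :: "real \<Rightarrow> 'a::euclidean_space"
  assumes x: "x \<in> spaceE" and lam: "lam \<in> {0..1}"
    and ode: "\<And>t. ddot x t = lam *\<^sub>R F t + (1 - lam) *\<^sub>R x t"
    and bounded: "\<And>t. norm (x t) \<le> R" and "0 \<le> \<alpha>" "0 \<le> K"
    and F_bound: "\<And>t. norm (F t) \<le> \<alpha> * (x t \<bullet> F t + (norm (dot x t))\<^sup>2) + K"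
  shows "norm (dot x t) \<le> 2 * pi * (K + R)"
proof -
  have pointwise: "norm (ddot x s) \<le> \<alpha> * (x s \<bullet> ddot x s + dot x s \<bullet> dot x s) + (K + R)" for s
    using norm_convex_combination_le_inner[of lam "x s" R \<alpha> K "(norm (dot x s))\<^sup>2" "F s"]
      lam bounded \<open>0 \<le> \<alpha>\<close> \<open>0 \<le> K\<close> F_bound
    by (simp add: ode power2_norm_eq_inner)
  have "((\<lambda>s. \<alpha> * (x s \<bullet> ddot x s + dot x s \<bullet> dot x s) + (K + R)) has_integral
      \<alpha> * 0 + Henstock_Kurzweil_Integration.content {t..t + 2 * pi} *\<^sub>R (K + R)) {t..t + 2 * pi}"
    by (intro has_integral_add has_integral_mult_right spaceE_integral_period_inner x
        has_integral_const_real)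
  moreover have "(\<lambda>s. norm (ddot x s)) integrable_on {t..t + 2 * pi}"
    by (auto intro!: integrable_continuous_real continuous_intros
        continuous_on_subset[OF spaceE_ddot_continuous[OF x]])
  ultimately have "integral {t..t + 2 * pi} (\<lambda>s. norm (ddot x s))
      \<le> \<alpha> * 0 + Henstock_Kurzweil_Integration.content {t..t + 2 * pi} *\<^sub>R (K + R)"
    using has_integral_le[OF integrable_integral] pointwise by blast
  then have "integral {t..t + 2 * pi} (\<lambda>s. norm (ddot x s)) \<le> 2 * pi * (K + R)"
    by (simp add: content_real)
  then show ?thesis
    using spaceE_norm_dot_le_integral[OF x, of t] by linarith
qed

lemma normE_le:
  assumes "\<And>t. norm (u t) \<le> a" "\<And>t. norm (dot u t) \<le> b" "\<And>t. norm (ddot u t) \<le> c"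
  shows "normE u \<le> max a (max b c)"
  unfolding normE_def using assms by (intro max.mono cSup_least) auto

lemma opF_zero_normE_le:
  fixes f :: "real \<Rightarrow> 'a::euclidean_space \<Rightarrow> (nat \<Rightarrow> 'a) \<Rightarrow> 'a \<Rightarrow> 'a"
  assumes m: "m \<ge> 1"
    and A0_cont: "continuous_on (UNIV \<times> UNIV \<times> tuples m \<times> UNIV) (\<lambda>(t, x, y, z). f t x y z)"
    and A0_per: "\<forall>t x y z. y \<in> tuples m \<longrightarrow> f (t + 2 * pi) x y z = f t x y z"
    and "0 < R"
    and A1: "\<forall>t x y z. y \<in> tuples m \<longrightarrow> norm x \<ge> R \<longrightarrow> tnorm m y \<le> norm x
                \<longrightarrow> x \<bullet> z = 0 \<longrightarrow> x \<bullet> f t x y z > 0"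
    and \<phi>: "\<forall>t x y z. y \<in> tuples m \<longrightarrow> norm x \<le> R \<longrightarrow> tnorm m y \<le> R
                \<longrightarrow> norm (f t x y z) \<le> \<phi> (norm z)"
    and B: "\<And>s. s \<in> {0..2 * pi * (K + R)} \<Longrightarrow> \<phi> s \<le> B"
    and "0 \<le> \<alpha>" "0 \<le> K"
    and A3: "\<forall>t x y z. y \<in> tuples m \<longrightarrow> norm x \<le> R \<longrightarrow> tnorm m y \<le> R
                \<longrightarrow> norm (f t x y z) \<le> \<alpha> * (x \<bullet> f t x y z + (norm z)\<^sup>2) + K"
    and lam: "lam \<in> {0..1}" and x: "x \<in> spaceE" and zero: "opF m tau f lam x = (\<lambda>t. 0)"
  shows "normE x \<le> max R (max (2 * pi * (K + R)) (B + R))"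
proof -
  define F where "F t = f t (x t) (delayed m tau x t) (dot x t)" for t
  have ode: "ddot x t = lam *\<^sub>R F t + (1 - lam) *\<^sub>R x t" for t
    unfolding F_def by (rule opF_zero_imp_ode[OF A0_cont A0_per x zero])
  have x_lt: "norm (x t) < R" for t
  proof (rule homotopy_solution_norm_lt[OF x lam \<open>0 < R\<close> ode])
    fix t
    assume big: "R \<le> norm (x t)" and max: "\<And>s. norm (x s) \<le> norm (x t)"
      and orth: "x t \<bullet> dot x t = 0"
    show "0 < x t \<bullet> F t"
      unfolding F_def
      by (rule A1[rule_format, OF delayed_in_tuples big tnorm_delayed_le[OF m max] orth])
  qed
  then have small: "norm (x t) \<le> R" for t
    by (simp add: less_imp_le)
  note small_delayed = tnorm_delayed_le[OF m small]
  have "norm (F t) \<le> \<alpha> * (x t \<bullet> F t + (norm (dot x t))\<^sup>2) + K" for t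
    unfolding F_def by (rule A3[rule_format, OF delayed_in_tuples small small_delayed])
  then have x'_le: "norm (dot x t) \<le> 2 * pi * (K + R)" for t
    by (rule homotopy_solution_dot_bound[OF x lam ode small \<open>0 \<le> \<alpha>\<close> \<open>0 \<le> K\<close>])
  have x''_le: "norm (ddot x t) \<le> B + R" for t
  proof -
    have "norm (F t) \<le> \<phi> (norm (dot x t))"
      unfolding F_def by (rule \<phi>[rule_format, OF delayed_in_tuples small small_delayed])
    moreover have "\<phi> (norm (dot x t)) \<le> B"
      using B x'_le[of t] by simp
    moreover have "lam * norm (F t) \<le> norm (F t)"
      using lam by (simp add: mult_left_le_one_le)
    moreover have "norm (ddot x t) \<le> lam * norm (F t) + R"
      unfolding ode by (rule norm_convex_combination_le) (use lam small in auto)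
    ultimately show ?thesis
      by linarith
  qed
  show ?thesis
    by (rule normE_le[OF small x'_le x''_le])
qed

theorem lemma4p2:
  fixes m :: nat and tau :: "nat \<Rightarrow> real" and R :: real
    and f :: "real \<Rightarrow> 'a::euclidean_space \<Rightarrow> (nat \<Rightarrow> 'a) \<Rightarrow> 'a \<Rightarrow> 'a"
  assumes m: "m \<ge> 1"
    and tau0: "tau 0 = 0"
    and tau_mono: "\<forall>j<m. tau j < tau (Suc j)"
    and tau_lt: "tau m < 2 * pi"
    and tau_sym: "\<forall>j\<in>{1..m}. tau (m - j + 1) = 2 * pi - tau j"
    and A0_cont: "continuous_on (UNIV \<times> UNIV \<times> tuples m \<times> UNIV)
                    (\<lambda>(t, x, y, z). f t x y z)"
    and A0_per: "\<forall>t x y z. y \<in> tuples m \<longrightarrow> f (t + 2 * pi) x y z = f t x y z"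
    and R_pos: "R > 0"
    and A1: "\<forall>t x y z. y \<in> tuples m \<longrightarrow> norm x \<ge> R \<longrightarrow> tnorm m y \<le> norm x
                \<longrightarrow> x \<bullet> z = 0 \<longrightarrow> x \<bullet> f t x y z > 0"
    and A2: "\<exists>\<phi> :: real \<Rightarrow> real. continuous_on {0..} \<phi> \<and> (\<forall>s\<ge>0. \<phi> s > 0)
                \<and> filterlim (\<lambda>T. integral {0..T} (\<lambda>s. s / \<phi> s)) at_top at_top
                \<and> (\<forall>t x y z. y \<in> tuples m \<longrightarrow> norm x \<le> R \<longrightarrow> tnorm m y \<le> R
                      \<longrightarrow> norm (f t x y z) \<le> \<phi> (norm z))"
    and A3: "\<exists>\<alpha> K :: real. \<alpha> > 0 \<and> K > 0
                \<and> (\<forall>t x y z. y \<in> tuples m \<longrightarrow> norm x \<le> R \<longrightarrow> tnorm m y \<le> R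
                      \<longrightarrow> norm (f t x y z) \<le> \<alpha> * (x \<bullet> f t x y z + (norm z)\<^sup>2) + K)"
  shows "\<exists>C > 0. \<forall>lam \<in> {0..1}. \<forall>x \<in> spaceE.
            opF m tau f lam x = (\<lambda>t. 0) \<longrightarrow> normE x < C"
proof -
  obtain \<phi> :: "real \<Rightarrow> real" where \<phi>_cont: "continuous_on {0..} \<phi>"
    and \<phi>: "\<forall>t x y z. y \<in> tuples m \<longrightarrow> norm x \<le> R \<longrightarrow> tnorm m y \<le> R
                \<longrightarrow> norm (f t x y z) \<le> \<phi> (norm z)"
    using A2 by blast
  obtain \<alpha> K :: real where "\<alpha> > 0" "K > 0"
    and A3': "\<forall>t x y z. y \<in> tuples m \<longrightarrow> norm x \<le> R \<longrightarrow> tnorm m y \<le> R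
                \<longrightarrow> norm (f t x y z) \<le> \<alpha> * (x \<bullet> f t x y z + (norm z)\<^sup>2) + K"
    using A3 by blast
  have "bdd_above (\<phi> ` {0..2 * pi * (K + R)})"
    by (intro bounded_imp_bdd_above compact_imp_bounded compact_continuous_image
        continuous_on_subset[OF \<phi>_cont]) auto
  then obtain B where B: "\<And>s. s \<in> {0..2 * pi * (K + R)} \<Longrightarrow> \<phi> s \<le> B"
    unfolding bdd_above_def by blast
  define C where "C = max R (max (2 * pi * (K + R)) (B + R)) + 1"
  have "normE x < C" if "lam \<in> {0..1}" "x \<in> spaceE" "opF m tau f lam x = (\<lambda>t. 0)" for lam x
    using opF_zero_normE_le[OF m A0_cont A0_per R_pos A1 \<phi> B _ _ A3' that] \<open>\<alpha> > 0\<close> \<open>K > 0\<close>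
    unfolding C_def by simp
  moreover have "C > 0"
    using R_pos max.cobounded1[of R "max (2 * pi * (K + R)) (B + R)"] unfolding C_def by linarith
  ultimately show ?thesis
    by blast
qed

end
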